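(* Let $(a_k)_{k\in\mathbb Z}$ be a nonnegative sequence in $\ell^2(\mathbb Z)$ and let $A=[a_{i-j}]_{i,j\in\mathbb N_0}$. Then \[\frac1{\sqrt2}\|(a_k)\|_2\le\mathfrak s(\mathcal S(A))\le\|(a_k)\|_2.\]
   Context: For a nonnegative matrix $A$, $\mathcal S(A)$ is the set of matrices $S=[s_{ij}]$ with $|s_{ij}|\le a_{ij}$ for all $i,j$, and $\mathfrak s(\mathcal S(A))=\sup_{S\in\mathcal S(A)}\|S\|_m$, where $\|S\|_m$ is the norm of the Schur multiplier $T=[t_{ij}]\mapsto[s_{ij}t_{ij}]$ on $\mathcal B(\ell^2(\mathbb N_0))$. *)

theory Defs
  imports "HOL-Analysis.Analysis"
begin

text \<open>Infinite matrices indexed by \<open>\<nat>\<^sub>0 \<times> \<nat>\<^sub>0\<close> with complex entries, viewed as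
  (possibly unbounded) operators on \<open>\<ell>\<^sup>2(\<nat>\<^sub>0)\<close>. The operator norm is computed as the
  supremum of the bilinear form over finitely supported vectors in the unit ball;
  it is \<open>\<infinity>\<close> exactly when the matrix does not define a bounded operator.\<close>

definition mat_norm :: "(nat \<Rightarrow> nat \<Rightarrow> complex) \<Rightarrow> ereal" where
  "mat_norm T = (SUP (n, x, y) \<in> {(n, x, y). (\<Sum>j<n. (cmod (x j))\<^sup>2) \<le> 1 \<and> (\<Sum>i<n. (cmod (y i))\<^sup>2) \<le> 1}.
      ereal (cmod (\<Sum>i<n. \<Sum>j<n. cnj (y i) * T i j * x j)))"

definition schur_mult_norm :: "(nat \<Rightarrow> nat \<Rightarrow> complex) \<Rightarrow> ereal" where
  "schur_mult_norm S = (SUP T \<in> {T. mat_norm T \<le> 1}. mat_norm (\<lambda>i j. S i j * T i j))"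

definition dominated_set :: "(nat \<Rightarrow> nat \<Rightarrow> real) \<Rightarrow> (nat \<Rightarrow> nat \<Rightarrow> complex) set" where
  "dominated_set A = {S. \<forall>i j. cmod (S i j) \<le> A i j}"

definition schur_sup :: "(nat \<Rightarrow> nat \<Rightarrow> real) \<Rightarrow> ereal" where
  "schur_sup A = (SUP S \<in> dominated_set A. schur_mult_norm S)"

definition l2norm_int :: "(int \<Rightarrow> real) \<Rightarrow> real" where
  "l2norm_int a = sqrt (infsum (\<lambda>k. (a k)\<^sup>2) UNIV)"

end

theory Submission
  imports Defs
begin

(*
  Upper bound: a Schur multiplier whose rows have l2-norm at most C has norm at most C
  (Cauchy-Schwarz, column by column), and every row of A has l2-norm at most ||a||_2.

  Lower bound: fix N, put b_k = a_k (1 - |k|/N) for |k| < N, M = 4 N^2 + 1, and consider the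
  quadratic Weyl sums G(beta, l) = sum_k b_k e((l k + beta k^2) / M), e(t) = exp(2 pi i t).
  Orthogonality of the characters e(./M) gives sum |G|^2 = M^2 ||b||^2, and since
  k1 + k3 = k2 + k4 together with k1^2 + k3^2 = k2^2 + k4^2 forces {k1, k3} = {k2, k4},
  also sum |G|^4 <= 2 M^2 ||b||^4.
  By Hoelder some row beta has sum_l |G(beta, l)| >= M ||b|| / sqrt 2. The N x N Toeplitz
  matrix T whose symbol c is the Fourier transform of the unimodular phases of that row is a
  compression of a unitary Fourier multiplier, hence a contraction. Choosing
  S_ij = a_(i-j) conj (sgn T_ij), the constant test vector shows
  ||S o T|| >= sum_k b_k |c_k| >= ||b|| / sqrt 2, and ||b|| tends to ||a||_2 as N grows.
*)

lemma sum_swap_pairs: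
  "(\<Sum>x\<in>A. \<Sum>y\<in>B. \<Sum>u\<in>C. \<Sum>v\<in>D. f x y u v) = (\<Sum>u\<in>C. \<Sum>v\<in>D. \<Sum>x\<in>A. \<Sum>y\<in>B. f x y u v)"
proof -
  have "(\<Sum>x\<in>A. \<Sum>y\<in>B. \<Sum>u\<in>C. \<Sum>v\<in>D. f x y u v) = (\<Sum>x\<in>A. \<Sum>u\<in>C. \<Sum>v\<in>D. \<Sum>y\<in>B. f x y u v)"
    by (rule sum.cong[OF refl], subst sum.swap, rule sum.cong[OF refl], rule sum.swap)
  also have "\<dots> = (\<Sum>u\<in>C. \<Sum>v\<in>D. \<Sum>x\<in>A. \<Sum>y\<in>B. f x y u v)"
    by (subst sum.swap, rule sum.cong[OF refl], rule sum.swap)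
  finally show ?thesis .
qed

lemma sum_swap3:
  "(\<Sum>x\<in>A. \<Sum>y\<in>B. \<Sum>z\<in>C. f x y z) = (\<Sum>z\<in>C. \<Sum>x\<in>A. \<Sum>y\<in>B. f x y z)"
  by (subst sum.swap, rule sum.cong[OF refl], rule sum.swap)

lemma sum_lessThan_if_less:
  fixes n N :: nat
  shows "(\<Sum>i<n. if i < N then f i else 0) = (\<Sum>i<min n N. f i)"
proof -
  have "{..<n} \<inter> {i. i < N} = {..<min n N}"
    by (auto simp: min_less_iff_conj)
  then show ?thesis
    by (simp add: sum.If_cases)
qed

lemma sum_toeplitz_diagonals:
  fixes f :: "int \<Rightarrow> 'a::comm_ring_1"
  shows "(\<Sum>i<N. \<Sum>j<N. f (int i - int j)) = (\<Sum>k\<in>{- int N<..<int N}. of_int (int N - \<bar>k\<bar>) * f k)"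
proof (induction N)
  case (Suc N)
  have new_diagonals: "(\<Sum>j<N. f (int N - int j)) + (\<Sum>i<Suc N. f (int i - int N)) =
                       (\<Sum>k\<in>{- int (Suc N)<..<int (Suc N)}. f k)"
  proof -
    have "(\<Sum>j<N. f (int N - int j)) = (\<Sum>k\<in>{1..int N}. f k)"
      by (rule sum.reindex_bij_witness[of _ "\<lambda>k. nat (int N - k)" "\<lambda>j. int N - int j"]) auto
    moreover have "(\<Sum>i<Suc N. f (int i - int N)) = (\<Sum>k\<in>{- int N..0}. f k)"
      by (rule sum.reindex_bij_witness[of _ "\<lambda>k. nat (k + int N)" "\<lambda>i. int i - int N"]) auto
    moreover have "{- int (Suc N)<..<int (Suc N)} = {1..int N} \<union> {- int N..0}"
      by auto
    ultimately show ?thesis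
      by (simp add: sum.union_disjoint)
  qed
  have old_diagonals: "(\<Sum>k\<in>{- int (Suc N)<..<int (Suc N)}. of_int (int N - \<bar>k\<bar>) * f k) =
                       (\<Sum>k\<in>{- int N<..<int N}. of_int (int N - \<bar>k\<bar>) * f k)"
  proof (rule sum.mono_neutral_right)
    show "\<forall>k\<in>{- int (Suc N)<..<int (Suc N)} - {- int N<..<int N}. of_int (int N - \<bar>k\<bar>) * f k = 0"
    proof
      fix k assume "k \<in> {- int (Suc N)<..<int (Suc N)} - {- int N<..<int N}"
      then have "\<bar>k\<bar> = int N"
        by auto
      then show "of_int (int N - \<bar>k\<bar>) * f k = 0"
        by simp
    qed
  qed auto
  have "(\<Sum>i<Suc N. \<Sum>j<Suc N. f (int i - int j)) =
        (\<Sum>i<N. \<Sum>j<N. f (int i - int j)) + (\<Sum>j<N. f (int N - int j)) + (\<Sum>i<Suc N. f (int i - int N))"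
    by (simp add: sum.distrib)
  also have "\<dots> = (\<Sum>k\<in>{- int (Suc N)<..<int (Suc N)}. (of_int (int N - \<bar>k\<bar>) + 1) * f k)"
    by (simp only: Suc.IH add.assoc new_diagonals old_diagonals distrib_right sum.distrib) simp
  finally show ?case
    by (simp add: algebra_simps)
qed simp

lemma norm_sum_power2:
  fixes z :: "'a \<Rightarrow> complex"
  shows "complex_of_real ((cmod (\<Sum>i\<in>I. z i))\<^sup>2) = (\<Sum>i\<in>I. \<Sum>j\<in>I. z i * cnj (z j))"
  by (simp only: complex_norm_square cnj_sum sum_product)

lemma cnj_sgn_mult: "cnj (sgn z) * z = complex_of_real (cmod z)"
proof (cases "z = 0")
  case False
  have "cnj (sgn z) * z = z * cnj z / complex_of_real (cmod z)"
    by (simp add: sgn_div_norm divide_inverse mult_ac scaleR_conv_of_real)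
  also have "\<dots> = complex_of_real (cmod z)"
    using False by (simp flip: complex_norm_square add: power2_eq_square)
  finally show ?thesis .
qed simp

lemma if_le_if_plus_if:
  fixes P :: "'a::ordered_comm_monoid_add"
  assumes "C \<Longrightarrow> A \<or> B" and "0 \<le> P"
  shows "(if C then P else 0) \<le> (if A then P else 0) + (if B then P else 0)"
  using assms by (auto simp: add_increasing add_increasing2)

lemma sum_power2_cube_le:
  fixes u :: "'a \<Rightarrow> real"
  assumes "\<And>i. i \<in> I \<Longrightarrow> 0 \<le> u i"
  shows "(\<Sum>i\<in>I. (u i)\<^sup>2) ^ 3 \<le> (\<Sum>i\<in>I. u i)\<^sup>2 * (\<Sum>i\<in>I. u i ^ 4)"
proof -
  define X Y Z W where "X = (\<Sum>i\<in>I. (u i)\<^sup>2)" and "Y = (\<Sum>i\<in>I. u i)"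
    and "Z = (\<Sum>i\<in>I. u i ^ 3)" and "W = (\<Sum>i\<in>I. u i ^ 4)"
  have "X\<^sup>2 \<le> Y * Z"
  proof -
    have "(\<Sum>i\<in>I. sqrt (u i) * (sqrt (u i) * u i))\<^sup>2 \<le>
          (\<Sum>i\<in>I. (sqrt (u i))\<^sup>2) * (\<Sum>i\<in>I. (sqrt (u i) * u i)\<^sup>2)"
      by (rule Cauchy_Schwarz_ineq_sum)
    also have "(\<Sum>i\<in>I. sqrt (u i) * (sqrt (u i) * u i)) = X"
      unfolding X_def using assms by (intro sum.cong refl) (simp add: power2_eq_square flip: mult.assoc)
    also have "(\<Sum>i\<in>I. (sqrt (u i))\<^sup>2) = Y"
      unfolding Y_def using assms by (intro sum.cong refl) simp
    also have "(\<Sum>i\<in>I. (sqrt (u i) * u i)\<^sup>2) = Z"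
      unfolding Z_def using assms by (intro sum.cong refl) (simp add: power_mult_distrib power3_eq_cube power2_eq_square)
    finally show ?thesis .
  qed
  moreover have "Z\<^sup>2 \<le> X * W"
  proof -
    have "(\<Sum>i\<in>I. u i * (u i)\<^sup>2)\<^sup>2 \<le> (\<Sum>i\<in>I. (u i)\<^sup>2) * (\<Sum>i\<in>I. ((u i)\<^sup>2)\<^sup>2)"
      by (rule Cauchy_Schwarz_ineq_sum)
    also have "(\<Sum>i\<in>I. u i * (u i)\<^sup>2) = Z"
      unfolding Z_def by (intro sum.cong refl) (simp add: power3_eq_cube power2_eq_square)
    also have "(\<Sum>i\<in>I. ((u i)\<^sup>2)\<^sup>2) = W"
      unfolding W_def by (simp flip: power_mult)
    finally show ?thesis
      unfolding X_def .
  qed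
  moreover have "0 \<le> X"
    unfolding X_def by (simp add: sum_nonneg)
  ultimately have "X * X ^ 3 \<le> X * (Y\<^sup>2 * W)"
  proof -
    have "X * X ^ 3 = (X\<^sup>2)\<^sup>2"
      by (simp add: power2_eq_square power3_eq_cube)
    also have "\<dots> \<le> (Y * Z)\<^sup>2"
      using \<open>X\<^sup>2 \<le> Y * Z\<close> by (intro power_mono) simp_all
    also have "\<dots> = Y\<^sup>2 * Z\<^sup>2"
      by (simp add: power_mult_distrib)
    also have "\<dots> \<le> Y\<^sup>2 * (X * W)"
      using \<open>Z\<^sup>2 \<le> X * W\<close> by (intro mult_left_mono) simp_all
    finally show ?thesis
      by (simp add: mult_ac)
  qed
  with \<open>0 \<le> X\<close> show ?thesis
    unfolding X_def[symmetric] Y_def[symmetric] W_def[symmetric]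
    by (cases "X = 0") (simp_all add: W_def sum_nonneg)
qed

lemma fourth_moment_lower_bound:
  fixes u :: "'a \<Rightarrow> real"
  assumes "\<And>i. i \<in> I \<Longrightarrow> 0 \<le> u i" and "0 < m"
    and second: "(\<Sum>i\<in>I. (u i)\<^sup>2) = m * B" and fourth: "(\<Sum>i\<in>I. u i ^ 4) \<le> 2 * m * B\<^sup>2"
  shows "m * sqrt (B / 2) \<le> (\<Sum>i\<in>I. u i)"
proof -
  define Y where "Y = (\<Sum>i\<in>I. u i)"
  have "0 \<le> Y" "0 \<le> m * B"
    unfolding Y_def second[symmetric] using assms(1) by (simp_all add: sum_nonneg)
  then have "0 \<le> B"
    using \<open>0 < m\<close> by (simp add: zero_le_mult_iff)
  have "(m * B) ^ 3 \<le> Y\<^sup>2 * (2 * m * B\<^sup>2)"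
    unfolding Y_def second[symmetric]
    using sum_power2_cube_le[of I u] assms(1) fourth by (force intro: order_trans mult_left_mono)
  show ?thesis
  proof (cases "B = 0")
    case False
    have "(m * B\<^sup>2) * (m\<^sup>2 * B) \<le> (m * B\<^sup>2) * (2 * Y\<^sup>2)"
      using \<open>(m * B) ^ 3 \<le> Y\<^sup>2 * (2 * m * B\<^sup>2)\<close>
      by (simp add: power2_eq_square power3_eq_cube mult_ac)
    moreover have "0 < m * B\<^sup>2"
      using False \<open>0 < m\<close> by simp
    ultimately have "m\<^sup>2 * B \<le> 2 * Y\<^sup>2"
      by (rule mult_left_le_imp_le)
    then have "(m * sqrt (B / 2))\<^sup>2 \<le> Y\<^sup>2"
      using \<open>0 \<le> B\<close> by (simp add: power_mult_distrib)
    then show ?thesis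
      unfolding Y_def[symmetric] using \<open>0 \<le> Y\<close> by (rule power2_le_imp_le)
  qed (simp add: \<open>0 \<le> Y\<close>[unfolded Y_def])
qed

section \<open>Characters of the cyclic group\<close>

definition cis_frac :: "nat \<Rightarrow> int \<Rightarrow> complex" where
  "cis_frac M k = cis (2 * pi * of_int k / real M)"

lemma cis_frac_add: "cis_frac M (j + k) = cis_frac M j * cis_frac M k"
  by (simp add: cis_frac_def cis_mult add_divide_distrib distrib_left)

lemma cnj_cis_frac: "cnj (cis_frac M k) = cis_frac M (- k)"
  by (simp add: cis_frac_def cis_cnj)

lemma norm_cis_frac [simp]: "norm (cis_frac M k) = 1"
  by (simp add: cis_frac_def)

lemma cis_frac_0 [simp]: "cis_frac M 0 = 1"
  by (simp add: cis_frac_def)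

lemma cis_frac_mult_cnj: "cis_frac M j * cnj (cis_frac M k) = cis_frac M (j - k)"
  by (simp add: cnj_cis_frac flip: cis_frac_add)

lemma cis_frac_power: "cis_frac M k ^ n = cis_frac M (int n * k)"
proof -
  have "real n * (2 * pi * real_of_int k / real M) = 2 * pi * real_of_int (int n * k) / real M"
    by simp
  then show ?thesis by (simp only: cis_frac_def Complex.DeMoivre)
qed

lemma cis_frac_eq_1_imp_dvd:
  assumes "0 < M" and "cis_frac M k = 1"
  shows "int M dvd k"
proof -
  have "cos (2 * pi * of_int k / real M) = 1"
    using assms(2) unfolding cis_frac_def by (metis cis.sel(1) one_complex.sel(1))
  then obtain n :: int where "2 * pi * of_int k / real M = of_int n * 2 * pi"
    using cos_one_2pi_int by blast
  then have "real_of_int k = real_of_int (int M * n)"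
    using assms(1) by (simp add: field_simps)
  then show ?thesis by (simp only: of_int_eq_iff dvd_triv_left)
qed

lemma sum_cis_frac_orthogonal:
  assumes "0 < M" and "\<bar>d\<bar> < int M"
  shows "(\<Sum>l<M. cis_frac M (int l * d)) = (if d = 0 then of_nat M else 0)"
proof (cases "d = 0")
  case False
  have "cis_frac M d \<noteq> 1"
  proof
    assume "cis_frac M d = 1"
    then have "\<bar>int M\<bar> \<le> \<bar>d\<bar>"
      using False by (intro dvd_imp_le_int cis_frac_eq_1_imp_dvd assms(1))
    with assms(2) show False by simp
  qed
  moreover have "cis_frac M d ^ M = 1"
  proof -
    have "2 * pi * real_of_int (int M * d) / real M = 2 * pi * real_of_int d"
      using assms(1) by simp
    then show ?thesis
      unfolding cis_frac_power unfolding cis_frac_def by (simp only: cis_multiple_2pi Ints_of_int)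
  qed
  ultimately have "(\<Sum>l<M. cis_frac M d ^ l) = 0"
    by (simp add: sum_gp_strict)
  with False show ?thesis by (simp add: cis_frac_power)
qed simp

lemma sum_cis_frac_orthogonal2:
  assumes "0 < M" and "\<bar>x\<bar> < int M" and "\<bar>y\<bar> < int M"
  shows "(\<Sum>\<beta><M. \<Sum>l<M. cis_frac M (int l * x + int \<beta> * y)) =
         (if x = 0 \<and> y = 0 then of_nat M ^ 2 else 0)"
proof -
  have "(\<Sum>\<beta><M. \<Sum>l<M. cis_frac M (int l * x + int \<beta> * y)) =
        (\<Sum>\<beta><M. (\<Sum>l<M. cis_frac M (int l * x)) * cis_frac M (int \<beta> * y))"
    by (simp add: cis_frac_add sum_distrib_right)
  also have "\<dots> = (\<Sum>l<M. cis_frac M (int l * x)) * (\<Sum>\<beta><M. cis_frac M (int \<beta> * y))"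
    by (simp add: sum_distrib_left)
  finally show ?thesis
    using sum_cis_frac_orthogonal[OF assms(1,2)] sum_cis_frac_orthogonal[OF assms(1,3)]
    by (simp add: power2_eq_square)
qed

lemma sum_norm_dft_power2:
  assumes "0 < M" and "m \<le> M"
  shows "(\<Sum>l<M. (cmod (\<Sum>j<m. x j * cis_frac M (- int l * int j)))\<^sup>2) =
         real M * (\<Sum>j<m. (cmod (x j))\<^sup>2)"
proof -
  have "complex_of_real (\<Sum>l<M. (cmod (\<Sum>j<m. x j * cis_frac M (- int l * int j)))\<^sup>2) =
        (\<Sum>j<m. \<Sum>j'<m. x j * cnj (x j') * (\<Sum>l<M. cis_frac M (int l * (int j' - int j))))"
    unfolding of_real_sum norm_sum_power2
    by (simp add: sum_distrib_left cis_frac_mult_cnj algebra_simps sum.swap[of _ "{..<M}"])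
  also have "\<dots> = (\<Sum>j<m. \<Sum>j'<m. if j' = j then x j * cnj (x j) * of_nat M else 0)"
    using assms by (intro sum.cong refl) (simp add: sum_cis_frac_orthogonal)
  also have "\<dots> = complex_of_real (real M * (\<Sum>j<m. (cmod (x j))\<^sup>2))"
    by (simp add: complex_norm_square sum_distrib_left mult_ac del: of_real_power)
  finally show ?thesis
    using of_real_eq_iff by blast
qed

section \<open>Moments of quadratic Weyl sums\<close>

definition phase_sum ::
    "nat \<Rightarrow> 'a set \<Rightarrow> ('a \<Rightarrow> real) \<Rightarrow> ('a \<Rightarrow> int) \<Rightarrow> ('a \<Rightarrow> int) \<Rightarrow> nat \<Rightarrow> nat \<Rightarrow> complex" where
  "phase_sum M I c p q \<beta> l = (\<Sum>i\<in>I. of_real (c i) * cis_frac M (int l * p i + int \<beta> * q i))"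

lemma sum_norm_phase_sum_power2:
  assumes "0 < M" and "finite I"
    and "\<And>i j. i \<in> I \<Longrightarrow> j \<in> I \<Longrightarrow> \<bar>p i - p j\<bar> < int M \<and> \<bar>q i - q j\<bar> < int M"
  shows "(\<Sum>\<beta><M. \<Sum>l<M. (cmod (phase_sum M I c p q \<beta> l))\<^sup>2) =
         (real M)\<^sup>2 * (\<Sum>i\<in>I. \<Sum>j\<in>I. if p i = p j \<and> q i = q j then c i * c j else 0)"
proof -
  have "phase_sum M I c p q \<beta> l * cnj (phase_sum M I c p q \<beta> l) =
        (\<Sum>i\<in>I. \<Sum>j\<in>I. of_real (c i * c j) *
           cis_frac M (int l * (p i - p j) + int \<beta> * (q i - q j)))" for \<beta> l
    unfolding phase_sum_def cnj_sum sum_product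
    by (intro sum.cong refl) (simp add: cis_frac_mult_cnj algebra_simps)
  then have "complex_of_real (\<Sum>\<beta><M. \<Sum>l<M. (cmod (phase_sum M I c p q \<beta> l))\<^sup>2) =
        (\<Sum>\<beta><M. \<Sum>l<M. \<Sum>i\<in>I. \<Sum>j\<in>I. of_real (c i * c j) *
           cis_frac M (int l * (p i - p j) + int \<beta> * (q i - q j)))"
    by (simp only: of_real_sum complex_norm_square)
  also have "\<dots> = (\<Sum>i\<in>I. \<Sum>j\<in>I. of_real (c i * c j) *
           (\<Sum>\<beta><M. \<Sum>l<M. cis_frac M (int l * (p i - p j) + int \<beta> * (q i - q j))))"
    unfolding sum_distrib_left by (rule sum_swap_pairs)
  also have "\<dots> = (\<Sum>i\<in>I. \<Sum>j\<in>I. of_real (c i * c j) *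
           (if p i - p j = 0 \<and> q i - q j = 0 then of_nat M ^ 2 else 0))"
    using assms by (intro sum.cong refl) (simp only: sum_cis_frac_orthogonal2)
  also have "\<dots> = complex_of_real ((real M)\<^sup>2 *
                   (\<Sum>i\<in>I. \<Sum>j\<in>I. if p i = p j \<and> q i = q j then c i * c j else 0))"
    by (simp add: sum_distrib_left) (intro sum.cong refl; simp)
  finally show ?thesis
    using of_real_eq_iff by blast
qed

definition weyl_sum :: "nat \<Rightarrow> int set \<Rightarrow> (int \<Rightarrow> real) \<Rightarrow> nat \<Rightarrow> nat \<Rightarrow> complex" where
  "weyl_sum M K b = phase_sum M K b (\<lambda>k. k) (\<lambda>k. k\<^sup>2)"

(* Squaring turns fourth moments of Weyl sums into second moments of phase sums over pairs. *)
lemma weyl_sum_power2: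
  "(weyl_sum M K b \<beta> l)\<^sup>2 =
   phase_sum M (K \<times> K) (\<lambda>(k, k'). b k * b k') (\<lambda>(k, k'). k + k') (\<lambda>(k, k'). k\<^sup>2 + k'\<^sup>2) \<beta> l"
  unfolding weyl_sum_def phase_sum_def power2_eq_square[of "sum _ _"] sum_product sum.cartesian_product
  by (intro sum.cong refl) (auto simp: cis_frac_mult_cnj algebra_simps simp flip: cis_frac_add)

lemma sum_norm_weyl_sum_power2:
  assumes "0 < M" and "finite K"
    and "\<And>k k'. k \<in> K \<Longrightarrow> k' \<in> K \<Longrightarrow> \<bar>k - k'\<bar> < int M \<and> \<bar>k\<^sup>2 - k'\<^sup>2\<bar> < int M"
  shows "(\<Sum>\<beta><M. \<Sum>l<M. (cmod (weyl_sum M K b \<beta> l))\<^sup>2) = (real M)\<^sup>2 * (\<Sum>k\<in>K. (b k)\<^sup>2)"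
proof -
  have "(\<Sum>\<beta><M. \<Sum>l<M. (cmod (weyl_sum M K b \<beta> l))\<^sup>2) =
        (real M)\<^sup>2 * (\<Sum>k\<in>K. \<Sum>k'\<in>K. if k = k' \<and> k\<^sup>2 = k'\<^sup>2 then b k * b k' else 0)"
    unfolding weyl_sum_def by (rule sum_norm_phase_sum_power2) (use assms in auto)
  also have "\<dots> = (real M)\<^sup>2 * (\<Sum>k\<in>K. \<Sum>k'\<in>K. if k = k' then b k * b k' else 0)"
    by (intro arg_cong2[where f = times] sum.cong refl) auto
  finally show ?thesis
    using assms(2) by (simp add: power2_eq_square)
qed

lemma equal_sum_and_square_sum_int:
  fixes k1 k2 k3 k4 :: int
  assumes "k1 + k3 = k2 + k4" and "k1\<^sup>2 + k3\<^sup>2 = k2\<^sup>2 + k4\<^sup>2"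
  shows "(k2, k4) = (k1, k3) \<or> (k2, k4) = (k3, k1)"
proof -
  have k4: "k4 = k1 + k3 - k2"
    using assms(1) by simp
  have "2 * ((k1 - k2) * (k2 - k3)) = k1\<^sup>2 + k3\<^sup>2 - k2\<^sup>2 - k4\<^sup>2"
    by (simp add: k4 power2_eq_square algebra_simps)
  with k4 show ?thesis
    using assms(2) by auto
qed

lemma parabola_energy_le:
  fixes b :: "int \<Rightarrow> real"
  assumes "finite K" and "\<And>k. k \<in> K \<Longrightarrow> 0 \<le> b k"
  shows "(\<Sum>(k1, k3)\<in>K \<times> K. \<Sum>(k2, k4)\<in>K \<times> K.
            if k1 + k3 = k2 + k4 \<and> k1\<^sup>2 + k3\<^sup>2 = k2\<^sup>2 + k4\<^sup>2 then b k1 * b k3 * (b k2 * b k4) else 0)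
         \<le> 2 * (\<Sum>k\<in>K. (b k)\<^sup>2)\<^sup>2"
proof -
  define c where "c u = b (fst u) * b (snd u)" for u
  have "(\<Sum>(k1, k3)\<in>K \<times> K. \<Sum>(k2, k4)\<in>K \<times> K.
            if k1 + k3 = k2 + k4 \<and> k1\<^sup>2 + k3\<^sup>2 = k2\<^sup>2 + k4\<^sup>2 then b k1 * b k3 * (b k2 * b k4) else 0)
        = (\<Sum>u\<in>K \<times> K. \<Sum>v\<in>K \<times> K. if fst u + snd u = fst v + snd v \<and>
             (fst u)\<^sup>2 + (snd u)\<^sup>2 = (fst v)\<^sup>2 + (snd v)\<^sup>2 then c u * c v else 0)"
    by (simp only: split_def c_def)
  also have "\<dots> \<le> (\<Sum>u\<in>K \<times> K. \<Sum>v\<in>K \<times> K.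
                    (if v = u then c u * c v else 0) + (if v = prod.swap u then c u * c v else 0))"
  proof (intro sum_mono if_le_if_plus_if)
    fix u v :: "int \<times> int"
    assume "u \<in> K \<times> K" and "v \<in> K \<times> K"
    then show "0 \<le> c u * c v"
      using assms(2) by (simp add: c_def mem_Times_iff)
    show "v = u \<or> v = prod.swap u"
      if "fst u + snd u = fst v + snd v \<and> (fst u)\<^sup>2 + (snd u)\<^sup>2 = (fst v)\<^sup>2 + (snd v)\<^sup>2"
      using equal_sum_and_square_sum_int[of "fst u" "snd u" "fst v" "snd v"] that
      by (simp add: prod_eq_iff)
  qed
  also have "\<dots> = (\<Sum>u\<in>K \<times> K. c u * c u + c u * c (prod.swap u))"
    using assms(1) by (intro sum.cong refl) (simp add: sum.distrib mem_Times_iff)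
  also have "\<dots> = 2 * (\<Sum>u\<in>K \<times> K. (c u)\<^sup>2)"
    by (simp add: c_def sum_distrib_left power2_eq_square mult_ac)
  also have "(\<Sum>u\<in>K \<times> K. (c u)\<^sup>2) = (\<Sum>k\<in>K. (b k)\<^sup>2) * (\<Sum>k'\<in>K. (b k')\<^sup>2)"
    by (simp add: c_def power_mult_distrib sum_product sum.cartesian_product split_def)
  finally show ?thesis
    by (simp add: power2_eq_square)
qed

lemma sum_norm_weyl_sum_power4_le:
  assumes "0 < M" and "finite K" and "\<And>k. k \<in> K \<Longrightarrow> 0 \<le> b k"
    and "\<And>k1 k2 k3 k4. k1 \<in> K \<Longrightarrow> k2 \<in> K \<Longrightarrow> k3 \<in> K \<Longrightarrow> k4 \<in> K \<Longrightarrow>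
           \<bar>k1 + k3 - (k2 + k4)\<bar> < int M \<and> \<bar>k1\<^sup>2 + k3\<^sup>2 - (k2\<^sup>2 + k4\<^sup>2)\<bar> < int M"
  shows "(\<Sum>\<beta><M. \<Sum>l<M. (cmod (weyl_sum M K b \<beta> l)) ^ 4) \<le> 2 * (real M)\<^sup>2 * (\<Sum>k\<in>K. (b k)\<^sup>2)\<^sup>2"
proof -
  have "(\<Sum>\<beta><M. \<Sum>l<M. (cmod (weyl_sum M K b \<beta> l)) ^ 4) =
        (\<Sum>\<beta><M. \<Sum>l<M. (cmod ((weyl_sum M K b \<beta> l)\<^sup>2))\<^sup>2)"
    by (simp add: norm_power flip: power_mult)
  also have "\<dots> = (real M)\<^sup>2 * (\<Sum>(k1, k3)\<in>K \<times> K. \<Sum>(k2, k4)\<in>K \<times> K.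
       if k1 + k3 = k2 + k4 \<and> k1\<^sup>2 + k3\<^sup>2 = k2\<^sup>2 + k4\<^sup>2 then b k1 * b k3 * (b k2 * b k4) else 0)"
  proof -
    have "\<bar>(case u of (k, k') \<Rightarrow> k + k') - (case v of (k, k') \<Rightarrow> k + k')\<bar> < int M \<and>
          \<bar>(case u of (k, k') \<Rightarrow> k\<^sup>2 + k'\<^sup>2) - (case v of (k, k') \<Rightarrow> k\<^sup>2 + k'\<^sup>2)\<bar> < int M"
      if "u \<in> K \<times> K" and "v \<in> K \<times> K" for u v :: "int \<times> int"
      using assms(4)[of "fst u" "fst v" "snd u" "snd v"] that by (simp add: split_def mem_Times_iff)
    then show ?thesis
      unfolding weyl_sum_power2 using assms(1,2)
      by (subst sum_norm_phase_sum_power2) (simp_all add: split_def cong: if_cong)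
  qed
  also have "\<dots> \<le> (real M)\<^sup>2 * (2 * (\<Sum>k\<in>K. (b k)\<^sup>2)\<^sup>2)"
    using assms(2,3) by (intro mult_left_mono parabola_energy_le) simp_all
  finally show ?thesis
    by (simp only: mult_ac)
qed

lemma exists_row_sum_norm_weyl_sum_ge:
  assumes "0 < M" and "finite K" and "\<And>k. k \<in> K \<Longrightarrow> 0 \<le> b k"
    and "\<And>k1 k2 k3 k4. k1 \<in> K \<Longrightarrow> k2 \<in> K \<Longrightarrow> k3 \<in> K \<Longrightarrow> k4 \<in> K \<Longrightarrow>
           \<bar>k1 + k3 - (k2 + k4)\<bar> < int M \<and> \<bar>k1\<^sup>2 + k3\<^sup>2 - (k2\<^sup>2 + k4\<^sup>2)\<bar> < int M"
  shows "\<exists>\<beta><M. real M * sqrt ((\<Sum>k\<in>K. (b k)\<^sup>2) / 2) \<le> (\<Sum>l<M. cmod (weyl_sum M K b \<beta> l))"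
proof (rule ccontr)
  define B where "B = (\<Sum>k\<in>K. (b k)\<^sup>2)"
  define G where "G \<beta> l = cmod (weyl_sum M K b \<beta> l)" for \<beta> l
  have pairs: "(\<Sum>\<beta><M. \<Sum>l<M. f \<beta> l) = (\<Sum>p\<in>{..<M} \<times> {..<M}. f (fst p) (snd p))" for f :: "nat \<Rightarrow> nat \<Rightarrow> real"
    by (simp add: sum.cartesian_product split_def)
  have "(\<Sum>\<beta><M. \<Sum>l<M. (G \<beta> l)\<^sup>2) = (real M)\<^sup>2 * B"
    unfolding G_def B_def using assms(1,2)
  proof (rule sum_norm_weyl_sum_power2)
    show "\<bar>k - k'\<bar> < int M \<and> \<bar>k\<^sup>2 - k'\<^sup>2\<bar> < int M" if "k \<in> K" and "k' \<in> K" for k k'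
      using assms(4)[OF that(1) that(2) that(2) that(2)] by simp
  qed
  moreover have "(\<Sum>\<beta><M. \<Sum>l<M. G \<beta> l ^ 4) \<le> 2 * (real M)\<^sup>2 * B\<^sup>2"
    unfolding G_def B_def using assms by (rule sum_norm_weyl_sum_power4_le)
  ultimately have "(real M)\<^sup>2 * sqrt (B / 2) \<le> (\<Sum>\<beta><M. \<Sum>l<M. G \<beta> l)"
    using assms(1) unfolding pairs by (intro fourth_moment_lower_bound) (simp_all add: G_def)
  moreover assume "\<not> ?thesis"
  then have "(\<Sum>\<beta><M. \<Sum>l<M. G \<beta> l) < (\<Sum>\<beta><M. real M * sqrt (B / 2))"
    using assms(1) by (intro sum_strict_mono) (auto simp: G_def B_def not_le)
  ultimately show False
    by (simp add: power2_eq_square)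
qed

lemma parabola_differences_less:
  fixes k1 k2 k3 k4 :: int
  assumes "\<bar>k1\<bar> < int N" and "\<bar>k2\<bar> < int N" and "\<bar>k3\<bar> < int N" and "\<bar>k4\<bar> < int N"
  shows "\<bar>k1 + k3 - (k2 + k4)\<bar> < int (4 * N * N + 1) \<and>
         \<bar>k1\<^sup>2 + k3\<^sup>2 - (k2\<^sup>2 + k4\<^sup>2)\<bar> < int (4 * N * N + 1)"
proof -
  have square: "0 \<le> k\<^sup>2 \<and> k\<^sup>2 \<le> int N * int N" if "\<bar>k\<bar> < int N" for k :: int
  proof -
    have "\<bar>k\<bar> * \<bar>k\<bar> \<le> int N * int N"
      using that by (intro mult_mono) auto
    then show ?thesis
      by (simp add: power2_eq_square)
  qed
  have "int N \<le> int N * int N"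
    using le_square[of N] by (metis of_nat_le_iff of_nat_mult)
  moreover have "int (4 * N * N + 1) = 4 * (int N * int N) + 1"
    by simp
  ultimately show ?thesis
    using assms square[OF assms(1)] square[OF assms(2)] square[OF assms(3)] square[OF assms(4)]
    unfolding abs_less_iff by linarith
qed

section \<open>Matrix norms and Schur multipliers\<close>

lemma bilinear_le_mat_norm:
  assumes "(\<Sum>j<n. (cmod (x j))\<^sup>2) \<le> 1" and "(\<Sum>i<n. (cmod (y i))\<^sup>2) \<le> 1"
  shows "ereal (cmod (\<Sum>i<n. \<Sum>j<n. cnj (y i) * T i j * x j)) \<le> mat_norm T"
  unfolding mat_norm_def by (rule SUP_upper2[where i = "(n, x, y)"]) (use assms in auto)

lemma mat_norm_leI:
  assumes "\<And>n x y. (\<Sum>j<n. (cmod (x j))\<^sup>2) \<le> 1 \<Longrightarrow> (\<Sum>i<n. (cmod (y i))\<^sup>2) \<le> 1 \<Longrightarrow>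
             cmod (\<Sum>i<n. \<Sum>j<n. cnj (y i) * T i j * x j) \<le> C"
  shows "mat_norm T \<le> ereal C"
  unfolding mat_norm_def by (rule SUP_least) (use assms in auto)

lemma norm_bilinear_le_mat_norm:
  assumes "mat_norm T \<le> 1"
  shows "cmod (\<Sum>i<n. \<Sum>j<n. cnj (y i) * T i j * x j) \<le>
         sqrt (\<Sum>i<n. (cmod (y i))\<^sup>2) * sqrt (\<Sum>j<n. (cmod (x j))\<^sup>2)"
proof -
  define r s where "r = sqrt (\<Sum>i<n. (cmod (y i))\<^sup>2)" and "s = sqrt (\<Sum>j<n. (cmod (x j))\<^sup>2)"
  have zero_on: "\<forall>i<n. z i = 0" if "sqrt (\<Sum>i<n. (cmod (z i))\<^sup>2) = 0" for z :: "nat \<Rightarrow> complex"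
    using that by (simp add: sum_nonneg_eq_0_iff)
  show ?thesis
  proof (cases "r = 0 \<or> s = 0")
    case True
    then have "(\<forall>i<n. y i = 0) \<or> (\<forall>j<n. x j = 0)"
      using zero_on unfolding r_def s_def by blast
    then have "(\<Sum>i<n. \<Sum>j<n. cnj (y i) * T i j * x j) = 0"
      by (auto intro!: sum.neutral)
    then show ?thesis
      by (simp add: sum_nonneg)
  next
    case False
    then have "0 < r" "0 < s"
      unfolding r_def s_def by (simp_all add: sum_nonneg order_less_le)
    have unit: "(\<Sum>i<n. (cmod (z i / of_real t))\<^sup>2) \<le> 1"
      if "t = sqrt (\<Sum>i<n. (cmod (z i))\<^sup>2)" and "0 < t" for z t
      using that by (simp add: norm_divide power_divide flip: sum_divide_distrib)
    have "ereal (cmod (\<Sum>i<n. \<Sum>j<n. cnj (y i / of_real r) * T i j * (x j / of_real s))) \<le> 1"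
      using bilinear_le_mat_norm[OF unit unit] assms r_def s_def \<open>0 < r\<close> \<open>0 < s\<close> by (blast intro: order_trans)
    moreover have "(\<Sum>i<n. \<Sum>j<n. cnj (y i / of_real r) * T i j * (x j / of_real s)) =
                   (\<Sum>i<n. \<Sum>j<n. cnj (y i) * T i j * x j) / of_real (r * s)"
      by (simp add: sum_divide_distrib)
    ultimately show ?thesis
      unfolding r_def[symmetric] s_def[symmetric]
      using \<open>0 < r\<close> \<open>0 < s\<close> by (simp add: norm_divide norm_mult divide_le_eq)
  qed
qed

lemma norm_column_form_le:
  assumes "mat_norm T \<le> 1" and "j < n"
  shows "cmod (\<Sum>i<n. cnj (w i) * T i j) \<le> sqrt (\<Sum>i<n. (cmod (w i))\<^sup>2)"
  using norm_bilinear_le_mat_norm[OF assms(1), where n = n and y = w and x = "\<lambda>j'. if j' = j then 1 else 0"]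
    assms(2) by (simp add: if_distrib[of "\<lambda>t. _ * t"] if_distrib[of "\<lambda>t. (cmod t)\<^sup>2"] cong: if_cong)

lemma average_le_mat_norm:
  assumes "0 < N"
  shows "ereal (cmod (\<Sum>i<N. \<Sum>j<N. R i j) / real N) \<le> mat_norm R"
proof -
  define x where "x j = complex_of_real (1 / sqrt (real N))" for j :: nat
  have x: "(\<Sum>j<N. (cmod (x j))\<^sup>2) \<le> 1"
    using assms by (simp add: x_def norm_divide power_divide)
  have "(\<Sum>i<N. \<Sum>j<N. cnj (x i) * R i j * x j) = (\<Sum>i<N. \<Sum>j<N. R i j) / of_nat N"
    using assms by (simp add: x_def sum_divide_distrib field_simps flip: of_real_mult)
  then show ?thesis
    using bilinear_le_mat_norm[OF x x, of R] by (simp add: norm_divide)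
qed

lemma mat_norm_schur_le_row_norm:
  assumes "mat_norm T \<le> 1" and "0 \<le> C"
    and rows: "\<And>i n. (\<Sum>j<n. (cmod (S i j))\<^sup>2) \<le> C\<^sup>2"
  shows "mat_norm (\<lambda>i j. S i j * T i j) \<le> ereal C"
proof (rule mat_norm_leI)
  fix n :: nat and x y :: "nat \<Rightarrow> complex"
  assume x: "(\<Sum>j<n. (cmod (x j))\<^sup>2) \<le> 1" and y: "(\<Sum>i<n. (cmod (y i))\<^sup>2) \<le> 1"
  define r where "r j = sqrt (\<Sum>i<n. (cmod (y i * cnj (S i j)))\<^sup>2)" for j
  have abs_r: "\<bar>r j\<bar> = r j" for j
    unfolding r_def by (simp add: sum_nonneg)
  have "(\<Sum>i<n. \<Sum>j<n. cnj (y i) * (S i j * T i j) * x j) =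
        (\<Sum>j<n. x j * (\<Sum>i<n. cnj (y i * cnj (S i j)) * T i j))"
    by (subst sum.swap) (simp add: sum_distrib_left mult_ac)
  then have "cmod (\<Sum>i<n. \<Sum>j<n. cnj (y i) * (S i j * T i j) * x j) \<le>
             (\<Sum>j<n. cmod (x j) * cmod (\<Sum>i<n. cnj (y i * cnj (S i j)) * T i j))"
    by (simp add: norm_sum[THEN order_trans] norm_mult)
  also have "\<dots> \<le> (\<Sum>j<n. cmod (x j) * r j)"
    unfolding r_def by (intro sum_mono mult_left_mono norm_column_form_le assms(1)) simp_all
  also have "\<dots> \<le> sqrt (\<Sum>j<n. (cmod (x j))\<^sup>2) * sqrt (\<Sum>j<n. (r j)\<^sup>2)"
    using L2_set_mult_ineq[of "\<lambda>j. cmod (x j)" r "{..<n}"] by (simp add: abs_r L2_set_def)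
  also have "\<dots> \<le> sqrt (\<Sum>j<n. (r j)\<^sup>2)"
    using x by (intro mult_left_le_one_le) (simp_all add: sum_nonneg)
  also have "(\<Sum>j<n. (r j)\<^sup>2) = (\<Sum>j<n. \<Sum>i<n. (cmod (y i))\<^sup>2 * (cmod (S i j))\<^sup>2)"
    unfolding r_def by (simp add: sum_nonneg norm_mult power_mult_distrib)
  also have "\<dots> = (\<Sum>i<n. (cmod (y i))\<^sup>2 * (\<Sum>j<n. (cmod (S i j))\<^sup>2))"
    by (subst sum.swap) (simp add: sum_distrib_left)
  also have "\<dots> \<le> (\<Sum>i<n. (cmod (y i))\<^sup>2 * C\<^sup>2)"
    by (intro sum_mono mult_left_mono rows) simp
  also have "\<dots> \<le> C\<^sup>2"
    unfolding sum_distrib_right[symmetric] using y by (intro mult_left_le_one_le) (simp_all add: sum_nonneg)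
  finally show "cmod (\<Sum>i<n. \<Sum>j<n. cnj (y i) * (S i j * T i j) * x j) \<le> C"
    using assms(2) by (simp add: real_sqrt_le_iff)
qed

lemma schur_sup_le_row_norm:
  assumes "0 \<le> C" and "\<And>i n. (\<Sum>j<n. (A i j)\<^sup>2) \<le> C\<^sup>2"
  shows "schur_sup A \<le> ereal C"
  unfolding schur_sup_def schur_mult_norm_def
proof (intro SUP_least)
  fix S T
  assume "S \<in> dominated_set A" and "T \<in> {T. mat_norm T \<le> 1}"
  then have T: "mat_norm T \<le> 1" and dom: "cmod (S i j) \<le> A i j" for i j
    by (auto simp: dominated_set_def)
  have "(\<Sum>j<n. (cmod (S i j))\<^sup>2) \<le> C\<^sup>2" for i n
    using dom by (intro order_trans[OF sum_mono assms(2)] power_mono) simp_all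
  with T assms(1) show "mat_norm (\<lambda>i j. S i j * T i j) \<le> ereal C"
    by (rule mat_norm_schur_le_row_norm)
qed

section \<open>Toeplitz matrices\<close>

lemma sum_toeplitz_row_le_infsum:
  fixes a :: "int \<Rightarrow> real"
  assumes "(\<lambda>k. (a k)\<^sup>2) summable_on UNIV"
  shows "(\<Sum>j<n. (a (int i - int j))\<^sup>2) \<le> (\<Sum>\<^sub>\<infinity>k. (a k)\<^sup>2)"
proof -
  have "inj_on (\<lambda>j. int i - int j) {..<n}"
    by (auto simp: inj_on_def)
  then have "(\<Sum>j<n. (a (int i - int j))\<^sup>2) = (\<Sum>k\<in>(\<lambda>j. int i - int j) ` {..<n}. (a k)\<^sup>2)"
    by (simp add: sum.reindex)
  also have "\<dots> \<le> (\<Sum>\<^sub>\<infinity>k. (a k)\<^sup>2)"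
    using assms by (intro finite_sum_le_infsum) auto
  finally show ?thesis .
qed

lemma schur_sup_toeplitz_le_l2norm:
  fixes a :: "int \<Rightarrow> real"
  assumes "(\<lambda>k. (a k)\<^sup>2) summable_on UNIV"
  shows "schur_sup (\<lambda>i j. a (int i - int j)) \<le> ereal (l2norm_int a)"
proof (rule schur_sup_le_row_norm)
  have "0 \<le> (\<Sum>\<^sub>\<infinity>k. (a k)\<^sup>2)"
    by (simp add: infsum_nonneg)
  then show "0 \<le> l2norm_int a" and "(\<Sum>j<n. (a (int i - int j))\<^sup>2) \<le> (l2norm_int a)\<^sup>2" for i n
    using sum_toeplitz_row_le_infsum[OF assms] by (simp_all add: l2norm_int_def)
qed

definition toeplitz_section :: "nat \<Rightarrow> (int \<Rightarrow> complex) \<Rightarrow> nat \<Rightarrow> nat \<Rightarrow> complex" where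
  "toeplitz_section N c i j = (if i < N \<and> j < N then c (int i - int j) else 0)"

lemma bilinear_toeplitz_section:
  "(\<Sum>i<n. \<Sum>j<n. cnj (y i) * toeplitz_section N c i j * x j) =
   (\<Sum>i<min n N. \<Sum>j<min n N. cnj (y i) * c (int i - int j) * x j)"
proof -
  have "(\<Sum>j<n. cnj (y i) * toeplitz_section N c i j * x j) =
        (if i < N then \<Sum>j<min n N. cnj (y i) * c (int i - int j) * x j else 0)" for i
    by (cases "i < N") (auto simp: toeplitz_section_def intro!: sum.cong simp flip: sum_lessThan_if_less)
  then show ?thesis
    by (simp add: sum_lessThan_if_less)
qed

definition fourier_coeff :: "nat \<Rightarrow> (nat \<Rightarrow> complex) \<Rightarrow> int \<Rightarrow> complex" where
  "fourier_coeff M g d = (\<Sum>l<M. g l * cis_frac M (int l * d)) / of_nat M"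

lemma bilinear_fourier_coeff:
  "(\<Sum>i<m. \<Sum>j<m. cnj (y i) * fourier_coeff M g (int i - int j) * x j) =
   (\<Sum>l<M. g l * (cnj (\<Sum>i<m. y i * cis_frac M (- int l * int i)) *
                   (\<Sum>j<m. x j * cis_frac M (- int l * int j)))) / of_nat M"
proof -
  have "cnj (\<Sum>i<m. y i * cis_frac M (- int l * int i)) * (\<Sum>j<m. x j * cis_frac M (- int l * int j)) =
        (\<Sum>i<m. \<Sum>j<m. cnj (y i) * x j * cis_frac M (int l * (int i - int j)))" for l
    unfolding cnj_sum sum_product
    by (intro sum.cong refl) (simp add: cnj_cis_frac algebra_simps flip: cis_frac_add)
  then have "(\<Sum>l<M. g l * (cnj (\<Sum>i<m. y i * cis_frac M (- int l * int i)) *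
                   (\<Sum>j<m. x j * cis_frac M (- int l * int j)))) =
        (\<Sum>l<M. \<Sum>i<m. \<Sum>j<m. g l * (cnj (y i) * x j * cis_frac M (int l * (int i - int j))))"
    by (simp only: sum_distrib_left)
  also have "\<dots> = (\<Sum>i<m. \<Sum>j<m. \<Sum>l<M. g l * (cnj (y i) * x j * cis_frac M (int l * (int i - int j))))"
    by (rule sum_swap3[symmetric])
  finally show ?thesis
    by (simp add: fourier_coeff_def sum_distrib_left sum_distrib_right sum_divide_distrib mult_ac)
qed

lemma mat_norm_toeplitz_fourier_coeff_le:
  assumes "0 < M" and "N \<le> M" and g: "\<And>l. cmod (g l) \<le> 1"
  shows "mat_norm (toeplitz_section N (fourier_coeff M g)) \<le> 1"
proof -
  have "mat_norm (toeplitz_section N (fourier_coeff M g)) \<le> ereal 1"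
  proof (rule mat_norm_leI)
    fix n :: nat and x y :: "nat \<Rightarrow> complex"
    assume x: "(\<Sum>j<n. (cmod (x j))\<^sup>2) \<le> 1" and y: "(\<Sum>i<n. (cmod (y i))\<^sup>2) \<le> 1"
    define m where "m = min n N"
    define X where "X l = (\<Sum>j<m. x j * cis_frac M (- int l * int j))" for l
    define Y where "Y l = (\<Sum>j<m. y j * cis_frac M (- int l * int j))" for l
    have "m \<le> M"
      using assms(2) by (simp add: m_def)
    have unit: "(\<Sum>j<m. (cmod (z j))\<^sup>2) \<le> 1" if "(\<Sum>j<n. (cmod (z j))\<^sup>2) \<le> 1" for z
      using that sum_mono2[of "{..<n}" "{..<m}" "\<lambda>j. (cmod (z j))\<^sup>2"] by (force simp: m_def)
    have "(\<Sum>i<n. \<Sum>j<n. cnj (y i) * toeplitz_section N (fourier_coeff M g) i j * x j) =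
          (\<Sum>l<M. g l * (cnj (Y l) * X l)) / of_nat M"
      unfolding bilinear_toeplitz_section m_def[symmetric] X_def Y_def
      by (rule bilinear_fourier_coeff)
    also have "cmod \<dots> \<le> (\<Sum>l<M. cmod (Y l) * cmod (X l)) / real M"
      using g by (simp add: norm_divide divide_right_mono norm_sum[THEN order_trans] sum_mono
          norm_mult mult_left_le_one_le)
    also have "\<dots> \<le> sqrt (\<Sum>l<M. (cmod (Y l))\<^sup>2) * sqrt (\<Sum>l<M. (cmod (X l))\<^sup>2) / real M"
      using L2_set_mult_ineq[of "\<lambda>l. cmod (Y l)" "\<lambda>l. cmod (X l)" "{..<M}"]
      by (simp add: L2_set_def divide_right_mono)
    also have "\<dots> = sqrt (\<Sum>j<m. (cmod (y j))\<^sup>2) * sqrt (\<Sum>j<m. (cmod (x j))\<^sup>2)"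
    proof -
      have "sqrt (real M * a) * sqrt (real M * b) = (sqrt (real M) * sqrt (real M)) * (sqrt a * sqrt b)"
        for a b
        by (simp only: real_sqrt_mult mult_ac)
      then show ?thesis
        using assms(1) unfolding X_def Y_def sum_norm_dft_power2[OF assms(1) \<open>m \<le> M\<close>] by simp
    qed
    also have "\<dots> \<le> 1"
      using unit[OF x] unit[OF y] by (simp add: mult_le_one sum_nonneg)
    finally show "cmod (\<Sum>i<n. \<Sum>j<n. cnj (y i) * toeplitz_section N (fourier_coeff M g) i j * x j) \<le> 1" .
  qed
  then show ?thesis
    by (simp add: one_ereal_def)
qed

lemma sum_weyl_sum_fourier_coeff:
  "(\<Sum>k\<in>K. of_real (b k) * cis_frac M (int \<beta> * k\<^sup>2) * fourier_coeff M g k) =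
   (\<Sum>l<M. g l * weyl_sum M K b \<beta> l) / of_nat M"
proof -
  have "(\<Sum>k\<in>K. of_real (b k) * cis_frac M (int \<beta> * k\<^sup>2) * fourier_coeff M g k) =
        (\<Sum>k\<in>K. \<Sum>l<M. g l * (of_real (b k) * cis_frac M (int l * k + int \<beta> * k\<^sup>2))) / of_nat M"
    by (simp add: fourier_coeff_def cis_frac_add sum_distrib_left sum_divide_distrib mult_ac)
  also have "\<dots> = (\<Sum>l<M. g l * weyl_sum M K b \<beta> l) / of_nat M"
    by (subst sum.swap) (simp add: weyl_sum_def phase_sum_def sum_distrib_left)
  finally show ?thesis .
qed

lemma weighted_toeplitz_symbol_le_schur_sup:
  fixes a :: "int \<Rightarrow> real"
  assumes a: "\<And>k. 0 \<le> a k" and "0 < N" and T: "mat_norm (toeplitz_section N c) \<le> 1"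
  shows "ereal (\<Sum>k\<in>{- int N<..<int N}. a k * (1 - \<bar>real_of_int k\<bar> / real N) * cmod (c k))
         \<le> schur_sup (\<lambda>i j. a (int i - int j))"
proof -
  define T where "T = toeplitz_section N c"
  \<comment> \<open>\<open>S\<close> cancels the phases of \<open>T\<close>, so every entry of \<open>S * T\<close> is nonnegative.\<close>
  define S where "S i j = of_real (a (int i - int j)) * cnj (sgn (T i j))" for i j
  have S: "S \<in> dominated_set (\<lambda>i j. a (int i - int j))"
    using a by (simp add: dominated_set_def S_def norm_mult norm_sgn mult_left_le)
  have "(\<Sum>k\<in>{- int N<..<int N}. a k * (1 - \<bar>real_of_int k\<bar> / real N) * cmod (c k)) =
        (\<Sum>i<N. \<Sum>j<N. a (int i - int j) * cmod (c (int i - int j))) / real N"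
    unfolding sum_toeplitz_diagonals[of "\<lambda>k. a k * cmod (c k)" N]
    using \<open>0 < N\<close> by (simp add: sum_divide_distrib field_simps)
  also have "\<dots> = cmod (\<Sum>i<N. \<Sum>j<N. S i j * T i j) / real N"
    using a by (simp add: S_def T_def toeplitz_section_def mult.assoc cnj_sgn_mult sum_nonneg
        flip: of_real_sum of_real_mult)
  also have "ereal \<dots> \<le> mat_norm (\<lambda>i j. S i j * T i j)"
    using \<open>0 < N\<close> by (rule average_le_mat_norm)
  also have "\<dots> \<le> schur_mult_norm S"
    unfolding schur_mult_norm_def using T T_def by (intro SUP_upper2[where i = T]) auto
  also have "\<dots> \<le> schur_sup (\<lambda>i j. a (int i - int j))"
    unfolding schur_sup_def using S by (rule SUP_upper)
  finally show ?thesis .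
qed

definition fejer_energy :: "nat \<Rightarrow> (int \<Rightarrow> real) \<Rightarrow> real" where
  "fejer_energy N a = (\<Sum>k\<in>{- int N<..<int N}. (a k * (1 - \<bar>real_of_int k\<bar> / real N))\<^sup>2)"

lemma schur_sup_toeplitz_ge_fejer_energy:
  fixes a :: "int \<Rightarrow> real"
  assumes a: "\<And>k. 0 \<le> a k" and "0 < N"
  shows "ereal (sqrt (fejer_energy N a / 2)) \<le> schur_sup (\<lambda>i j. a (int i - int j))"
proof -
  define K where "K = {- int N<..<int N}"
  define M where "M = 4 * N * N + 1"
  define b where "b k = a k * (1 - \<bar>real_of_int k\<bar> / real N)" for k
  define B where "B = (\<Sum>k\<in>K. (b k)\<^sup>2)"
  have "0 < M" and "N \<le> M"
    unfolding M_def using le_square[of N] by linarith+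
  have "finite K"
    by (simp add: K_def)
  have b: "0 \<le> b k" if "k \<in> K" for k
  proof -
    have "\<bar>real_of_int k\<bar> \<le> real N"
      using that unfolding K_def by simp linarith
    then show ?thesis
      using a[of k] \<open>0 < N\<close> by (simp add: b_def)
  qed
  have "\<bar>k1 + k3 - (k2 + k4)\<bar> < int M \<and> \<bar>k1\<^sup>2 + k3\<^sup>2 - (k2\<^sup>2 + k4\<^sup>2)\<bar> < int M"
    if "k1 \<in> K" "k2 \<in> K" "k3 \<in> K" "k4 \<in> K" for k1 k2 k3 k4
    unfolding M_def using that by (intro parabola_differences_less) (auto simp: K_def)
  then have "\<exists>\<beta><M. real M * sqrt (B / 2) \<le> (\<Sum>l<M. cmod (weyl_sum M K b \<beta> l))"
    unfolding B_def using \<open>0 < M\<close> \<open>finite K\<close> b by (intro exists_row_sum_norm_weyl_sum_ge)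
  then obtain \<beta> where large: "real M * sqrt (B / 2) \<le> (\<Sum>l<M. cmod (weyl_sum M K b \<beta> l))"
    by blast
  define g where "g l = cnj (sgn (weyl_sum M K b \<beta> l))" for l
  define c where "c = fourier_coeff M g"
  have "g l * weyl_sum M K b \<beta> l = of_real (cmod (weyl_sum M K b \<beta> l))" for l
    unfolding g_def by (rule cnj_sgn_mult)
  then have "sqrt (B / 2) \<le> cmod (\<Sum>l<M. g l * weyl_sum M K b \<beta> l) / real M"
    using large \<open>0 < M\<close> by (simp add: sum_nonneg field_simps flip: of_real_sum)
  also have "\<dots> = cmod (\<Sum>k\<in>K. of_real (b k) * cis_frac M (int \<beta> * k\<^sup>2) * c k)"
    by (simp add: c_def sum_weyl_sum_fourier_coeff norm_divide)
  also have "\<dots> \<le> (\<Sum>k\<in>K. b k * cmod (c k))"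
    using b by (intro norm_sum[THEN order_trans] sum_mono) (simp add: norm_mult)
  finally have "ereal (sqrt (fejer_energy N a / 2)) \<le> ereal (\<Sum>k\<in>K. b k * cmod (c k))"
    by (simp add: fejer_energy_def K_def B_def b_def)
  also have "\<dots> \<le> schur_sup (\<lambda>i j. a (int i - int j))"
    unfolding K_def b_def using a \<open>0 < N\<close>
  proof (rule weighted_toeplitz_symbol_le_schur_sup)
    show "mat_norm (toeplitz_section N c) \<le> 1"
      unfolding c_def g_def using \<open>0 < M\<close> \<open>N \<le> M\<close>
      by (intro mat_norm_toeplitz_fourier_coeff_le) (simp_all add: norm_sgn)
  qed
  finally show ?thesis .
qed

lemma eventually_fejer_energy_gt:
  fixes a :: "int \<Rightarrow> real"
  assumes "(\<lambda>k. (a k)\<^sup>2) summable_on UNIV" and "t < (\<Sum>\<^sub>\<infinity>k. (a k)\<^sup>2)"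
  shows "\<forall>\<^sub>F N in sequentially. t < fejer_energy N a"
proof -
  obtain F where "finite F" and F: "dist (\<Sum>k\<in>F. (a k)\<^sup>2) (\<Sum>\<^sub>\<infinity>k. (a k)\<^sup>2) \<le> ((\<Sum>\<^sub>\<infinity>k. (a k)\<^sup>2) - t) / 2"
    using has_sum_finite_approximation[OF has_sum_infsum[OF assms(1)], of "((\<Sum>\<^sub>\<infinity>k. (a k)\<^sup>2) - t) / 2"]
      assms(2) by auto
  then have "t < (\<Sum>k\<in>F. (a k)\<^sup>2)"
    using assms(2) by (simp add: dist_real_def abs_if split: if_splits)
  moreover have "(\<lambda>N. \<Sum>k\<in>F. (a k * (1 - \<bar>real_of_int k\<bar> / real N))\<^sup>2) \<longlonglongrightarrow> (\<Sum>k\<in>F. (a k * (1 - 0))\<^sup>2)"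
    by (intro tendsto_intros)
  ultimately have "\<forall>\<^sub>F N in sequentially. t < (\<Sum>k\<in>F. (a k * (1 - \<bar>real_of_int k\<bar> / real N))\<^sup>2)"
    by (simp add: order_tendstoD(1))
  moreover have "\<forall>\<^sub>F N in sequentially. F \<subseteq> {- int N<..<int N}"
  proof -
    define R where "R = Max (insert 0 (abs ` F))"
    have "\<bar>k\<bar> \<le> R" if "k \<in> F" for k
      unfolding R_def using \<open>finite F\<close> that by (intro Max_ge) auto
    then show ?thesis
      by (intro eventually_mono[OF eventually_gt_at_top[of "nat R"]]) fastforce
  qed
  ultimately show ?thesis
  proof eventually_elim
    case (elim N)
    then show ?case
      unfolding fejer_energy_def by (meson finite_greaterThanLessThan_int order_less_le_trans
          sum_mono2 zero_le_power2)
  qed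
qed

lemma schur_sup_toeplitz_ge_l2norm:
  fixes a :: "int \<Rightarrow> real"
  assumes a: "\<And>k. 0 \<le> a k" and summable: "(\<lambda>k. (a k)\<^sup>2) summable_on UNIV"
  shows "ereal (l2norm_int a / sqrt 2) \<le> schur_sup (\<lambda>i j. a (int i - int j))"
proof (rule dense_le)
  fix x
  assume "x < ereal (l2norm_int a / sqrt 2)"
  then obtain r where "x < ereal r" and r: "r < l2norm_int a / sqrt 2"
    using ereal_dense2 by force
  have "ereal r \<le> schur_sup (\<lambda>i j. a (int i - int j))"
  proof (cases "r \<le> 0")
    case True
    have "0 \<le> sqrt (fejer_energy 1 a / 2)"
      unfolding fejer_energy_def by (simp add: sum_nonneg)
    then have "ereal r \<le> ereal (sqrt (fejer_energy 1 a / 2))"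
      using True by (metis ereal_less_eq(3) order_trans)
    also have "\<dots> \<le> schur_sup (\<lambda>i j. a (int i - int j))"
      using a by (rule schur_sup_toeplitz_ge_fejer_energy) simp
    finally show ?thesis .
  next
    case False
    then have "sqrt (2 * r\<^sup>2) = r * sqrt 2"
      by (simp add: real_sqrt_mult mult.commute)
    then have "sqrt (2 * r\<^sup>2) < sqrt (\<Sum>\<^sub>\<infinity>k. (a k)\<^sup>2)"
      using r by (simp add: l2norm_int_def field_simps)
    then have "2 * r\<^sup>2 < (\<Sum>\<^sub>\<infinity>k. (a k)\<^sup>2)"
      by simp
    with summable have "\<forall>\<^sub>F N in sequentially. 2 * r\<^sup>2 < fejer_energy N a"
      by (rule eventually_fejer_energy_gt)
    with eventually_gt_at_top[of 0] have "\<forall>\<^sub>F N in sequentially. 0 < N \<and> 2 * r\<^sup>2 < fejer_energy N a"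
      by (rule eventually_conj)
    then obtain N where "0 < N" and "2 * r\<^sup>2 < fejer_energy N a"
      using eventually_happens'[OF trivial_limit_sequentially] by blast
    then have "r < sqrt (fejer_energy N a / 2)"
      by (intro real_less_rsqrt) simp
    then have "ereal r \<le> ereal (sqrt (fejer_energy N a / 2))"
      by simp
    also have "\<dots> \<le> schur_sup (\<lambda>i j. a (int i - int j))"
      using a \<open>0 < N\<close> by (rule schur_sup_toeplitz_ge_fejer_energy)
    finally show ?thesis .
  qed
  with \<open>x < ereal r\<close> show "x \<le> schur_sup (\<lambda>i j. a (int i - int j))"
    by simp
qed

theorem theorem3p4:
  fixes a :: "int \<Rightarrow> real"
  assumes "\<And>k. a k \<ge> 0"
    and "(\<lambda>k. (a k)\<^sup>2) summable_on UNIV"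
  shows "ereal (l2norm_int a / sqrt 2) \<le> schur_sup (\<lambda>i j. a (int i - int j))
       \<and> schur_sup (\<lambda>i j. a (int i - int j)) \<le> ereal (l2norm_int a)"
  using schur_sup_toeplitz_ge_l2norm[OF assms] schur_sup_toeplitz_le_l2norm[OF assms(2)] ..

end
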